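(* Let $Q$ be a quantum circuit acting on $w$ qubits and let $N$ be a positive integer that is a power of two; set $l=\log_2 N+1$. Let $R_1^{(N)}$ be the circuit with registers: an $l$-qubit counter register $\mathsf{C}$ whose first qubit $\mathsf{C}^{(1)}$ is the first qubit of the whole circuit and holds the most significant bit, a single-qubit register $\mathsf{Q}$, and for each $j\in\{1,\dots,2N\}$ a $(w-1)$-qubit register $\mathsf{R}_j$ and a single-qubit register $\mathsf{X}_j$; it performs, for $j=1,\dots,2N$ in turn: apply $Q$ to $(\mathsf{Q},\mathsf{R}_j)$ (with $\mathsf{Q}$ as $Q$'s first qubit), apply CNOT with control $\mathsf{Q}$ and target $\mathsf{X}_j$, and apply the controlled-$U_{+1}^{(2N)}$ with control $\mathsf{Q}$ and target $\mathsf{C}$, where $U^{(2N)}_{+1}|j\rangle=|(j+1)\bmod 2N\rangle$; its output qubit is $\mathsf{C}^{(1)}$. Then \[p_{\mathrm{acc}}(R_1^{(N)},1)\ge \bigl(p_{\mathrm{acc}}(Q,1)\bigr)^{2N-1}.\]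
   Context: For a circuit $Q$ on $w$ qubits and $1\le k\le w$, $p_{\mathrm{acc}}(Q,k)=\mathrm{tr}\,\Pi_{\mathrm{acc}}Q\rho^{(w,k)}_{\mathrm{init}}Q^\dagger$, where $\rho^{(w,k)}_{\mathrm{init}}=(|0\rangle\langle0|)^{\otimes k}\otimes(I/2)^{\otimes(w-k)}$ and $\Pi_{\mathrm{acc}}=|0\rangle\langle0|\otimes I^{\otimes(w-1)}$; i.e., the first $k$ qubits start in $|0\rangle$, the remaining qubits are maximally mixed, and acceptance means the first qubit is measured as $0$ in the computational basis. For $R_1^{(N)}$, only $\mathsf{C}^{(1)}$ is clean; all other qubits (the rest of $\mathsf{C}$, $\mathsf{Q}$, $\mathsf{R}_j$, $\mathsf{X}_j$) start maximally mixed. The counter register $\mathsf{C}$ encodes an integer in $\{0,\dots,2N-1\}$ in binary. *)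

theory Defs
  imports Complex_Main "Jordan_Normal_Form.Matrix"
begin

text \<open>A computational
basis index i < 2^n encodes the qubits in big-endian order: qubit p (0-based,
p < n) is bit (n - 1 - p) of i, so qubit 0 (the "first qubit") is the most
significant bit.\<close>

definition qbit :: "nat \<Rightarrow> nat \<Rightarrow> nat \<Rightarrow> bool" where
  "qbit n i p = odd (i div 2 ^ (n - 1 - p))"

definition cadj :: "complex mat \<Rightarrow> complex mat" where
  "cadj A = mat (dim_col A) (dim_row A) (\<lambda>(i, j). cnj (A $$ (j, i)))"

definition is_unitary :: "nat \<Rightarrow> complex mat \<Rightarrow> bool" where
  "is_unitary d U \<longleftrightarrow> U \<in> carrier_mat d d \<and> cadj U * U = 1\<^sub>m d \<and> U * cadj U = 1\<^sub>m d"

definition is_circuit :: "nat \<Rightarrow> complex mat \<Rightarrow> bool" where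
  "is_circuit w Q \<longleftrightarrow> is_unitary (2 ^ w) Q"

text \<open>Index of the k-qubit local basis state obtained by reading the qubits at the
positions ps (ps!0 being the most significant, i.e. first, qubit of the gate).\<close>
definition qread :: "nat \<Rightarrow> nat list \<Rightarrow> nat \<Rightarrow> nat" where
  "qread n ps i = (\<Sum>t<length ps. (if qbit n i (ps ! t) then 2 ^ (length ps - 1 - t) else 0))"

definition lift :: "nat \<Rightarrow> nat list \<Rightarrow> complex mat \<Rightarrow> complex mat" where
  "lift n ps U = mat (2 ^ n) (2 ^ n) (\<lambda>(i, j).
     if (\<forall>p<n. p \<notin> set ps \<longrightarrow> qbit n i p = qbit n j p)
     then U $$ (qread n ps i, qread n ps j) else 0)"

text \<open>Controlled gate: the first qubit is the control.\<close>
definition controlled :: "nat \<Rightarrow> complex mat \<Rightarrow> complex mat" where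
  "controlled k U = mat (2 ^ (k + 1)) (2 ^ (k + 1)) (\<lambda>(i, j).
     if i < 2 ^ k \<and> j < 2 ^ k then (if i = j then 1 else 0)
     else if 2 ^ k \<le> i \<and> 2 ^ k \<le> j then U $$ (i - 2 ^ k, j - 2 ^ k) else 0)"

definition pauli_X :: "complex mat" where
  "pauli_X = mat 2 2 (\<lambda>(i, j). if i \<noteq> j then 1 else 0)"

definition CNOT :: "complex mat" where
  "CNOT = controlled 1 pauli_X"

definition incr :: "nat \<Rightarrow> complex mat" where
  "incr M = mat M M (\<lambda>(i, j). if i = (j + 1) mod M then 1 else 0)"

definition rho_init :: "nat \<Rightarrow> nat \<Rightarrow> complex mat" where
  "rho_init w k = mat (2 ^ w) (2 ^ w) (\<lambda>(i, j).
     if i = j \<and> (\<forall>p<k. \<not> qbit w i p) then 1 / 2 ^ (w - k) else 0)"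

definition Pi_acc :: "nat \<Rightarrow> complex mat" where
  "Pi_acc w = mat (2 ^ w) (2 ^ w) (\<lambda>(i, j). if i = j \<and> \<not> qbit w i 0 then 1 else 0)"

definition mtrace :: "complex mat \<Rightarrow> complex" where
  "mtrace A = (\<Sum>i<dim_row A. A $$ (i, i))"

definition p_acc :: "nat \<Rightarrow> complex mat \<Rightarrow> nat \<Rightarrow> real" where
  "p_acc w Q k = Re (mtrace (Pi_acc w * Q * rho_init w k * cadj Q))"

text \<open>The circuit R_1^{(N)} with N = 2^m, l = m + 1, for Q on w qubits.
 Qubit layout (0-based): C = qubits 0..l-1 (qubit 0 = C^(1), the most significant bit
 of the counter), Q = qubit l, and for j = 0..2N-1 (i.e. j+1 in the paper's indexing)
 R_{j+1} = qubits l+1+j*w .. l+1+j*w+(w-2), X_{j+1} = qubit l+1+j*w+(w-1).\<close>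

definition R1_nqubits :: "nat \<Rightarrow> nat \<Rightarrow> nat" where
  "R1_nqubits w m = (m + 1) + 1 + 2 * 2 ^ m * w"

definition R1_step :: "nat \<Rightarrow> nat \<Rightarrow> complex mat \<Rightarrow> nat \<Rightarrow> complex mat" where
  "R1_step w m Q j =
    (let n = R1_nqubits w m; l = m + 1; q = l; base = l + 1 + j * w;
         Rj = [base ..< base + (w - 1)]; Xj = base + (w - 1)
     in lift n (q # [0..<l]) (controlled l (incr (2 * 2 ^ m)))
        * lift n [q, Xj] CNOT
        * lift n (q # Rj) Q)"

fun R1_upto :: "nat \<Rightarrow> nat \<Rightarrow> complex mat \<Rightarrow> nat \<Rightarrow> complex mat" where
  "R1_upto w m Q 0 = 1\<^sub>m (2 ^ R1_nqubits w m)"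
| "R1_upto w m Q (Suc j) = R1_step w m Q j * R1_upto w m Q j"

definition R1 :: "nat \<Rightarrow> nat \<Rightarrow> complex mat \<Rightarrow> complex mat" where
  "R1 w m Q = R1_upto w m Q (2 * 2 ^ m)"

end

theory Submission
  imports Defs
begin

text \<open>All gates of R_1 other than the copies of Q are permutation matrices, and the CNOT
onto the fresh qubit X_j records the output of the j-th copy of Q. Hence two
computational-basis paths through the circuit that end in the same basis state never
interfere, and the transition probabilities of the circuit are sums over paths of products of
transition probabilities of gates. We keep only two families of paths: those in which every
copy of Q outputs 0 (the counter is never incremented) and those in which every copy outputs 1
(the counter is incremented 2N times, i.e. returns to its initial value); both end in an
accepting state. On the maximally mixed input the registers R_j are independent, so the
average over inputs factorises: in each family the first copy of Q contributes 1/2 (its qubit Q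
is itself maximally mixed) and each later copy contributes p_acc(Q,1), for the all-ones family
because unitarity gives the |1><1| block of Q the same weight as the |0><0| block. Altogether
p_acc(R_1,1) >= 2 * 1/2 * p_acc(Q,1)^(2N-1).\<close>

lemma qbit_iff_bit: "qbit n i p = bit i (n - 1 - p)"
  by (simp add: qbit_def bit_iff_odd)

lemma not_bit_ge: "(i::nat) < 2 ^ n \<Longrightarrow> n \<le> k \<Longrightarrow> \<not> bit i k"
  by (metis bit_take_bit_iff leD take_bit_nat_eq_self_iff)

lemma basis_index_eqI:
  assumes "(i::nat) < 2 ^ n" "j < 2 ^ n" "\<forall>p<n. qbit n i p = qbit n j p"
  shows "i = j"
proof (rule bit_eq_iff[THEN iffD2], intro allI impI)
  fix k
  show "bit i k = bit j k"
  proof (cases "k < n")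
    case True
    have "n - 1 - (n - 1 - k) = k" using True by simp
    then show ?thesis using assms(3)[rule_format, of "n - 1 - k"] True by (simp add: qbit_iff_bit)
  next
    case False
    then show ?thesis using not_bit_ge assms(1,2) by (meson not_le)
  qed
qed

lemma div_pow_eq_1_iff:
  assumes "(a::nat) < 2 ^ n" "n \<ge> 1"
  shows "a div 2 ^ (n - 1) = 1 \<longleftrightarrow> 2 ^ (n - 1) \<le> a"
proof (cases "2 ^ (n - 1) \<le> a")
  case True
  have "a < 2 * 2 ^ (n - 1)"
    using assms by (metis Suc_diff_1 less_one not_less power_Suc zero_less_iff_neq_zero)
  then show ?thesis using True by (simp add: le_div_geq)
qed simp

lemma qbit_0_iff_ge:
  assumes "i < 2 ^ n" "n \<ge> 1"
  shows "qbit n i 0 \<longleftrightarrow> 2 ^ (n - 1) \<le> i"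
proof (cases "2 ^ (n - 1) \<le> i")
  case True
  then show ?thesis using div_pow_eq_1_iff[OF assms] by (simp add: qbit_def)
qed (simp add: qbit_def)

definition set_qbit :: "nat \<Rightarrow> nat \<Rightarrow> bool \<Rightarrow> nat \<Rightarrow> nat" where
  "set_qbit n p v i = (if v then set_bit (n - 1 - p) i else unset_bit (n - 1 - p) i)"

lemma qbit_set_qbit:
  "p < n \<Longrightarrow> p' < n \<Longrightarrow> qbit n (set_qbit n p v i) p' = (if p' = p then v else qbit n i p')"
  by (auto simp: set_qbit_def qbit_iff_bit bit_set_bit_iff bit_unset_bit_iff)

lemma set_qbit_less:
  assumes "p < n" "i < 2 ^ n"
  shows "set_qbit n p v i < 2 ^ n"
proof -
  have "bit i k \<Longrightarrow> k < n" for k using not_bit_ge[OF assms(2), of k] by fastforce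
  then have "take_bit n (set_qbit n p v i) = set_qbit n p v i"
    by (intro bit_eq_iff[THEN iffD2])
       (use assms in \<open>auto simp: set_qbit_def bit_take_bit_iff bit_set_bit_iff bit_unset_bit_iff\<close>)
  then show ?thesis by (metis take_bit_nat_eq_self_iff)
qed

lemma qread_Nil [simp]: "qread n [] i = 0"
  by (simp add: qread_def)

lemma qread_Cons: "qread n (p # ps) i = (if qbit n i p then 2 ^ length ps else 0) + qread n ps i"
  unfolding qread_def by (simp only: length_Cons sum.lessThan_Suc_shift) (auto intro!: sum.cong)

lemma qread_less: "qread n ps i < 2 ^ length ps"
  by (induction ps) (auto simp: qread_Cons)

lemma qread_Cons_less_iff: "qread n (p # ps) i < 2 ^ length ps \<longleftrightarrow> \<not> qbit n i p"
  using qread_less[of n ps i] by (simp add: qread_Cons)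

lemma qread_cong: "\<forall>p\<in>set ps. qbit n i p = qbit n j p \<Longrightarrow> qread n ps i = qread n ps j"
  by (induction ps) (auto simp: qread_Cons)

lemma qbit_eq_if_qread_eq: "qread n ps i = qread n ps j \<Longrightarrow> \<forall>p\<in>set ps. qbit n i p = qbit n j p"
proof (induction ps)
  case (Cons p ps)
  have "qread n ps i < 2 ^ length ps" "qread n ps j < 2 ^ length ps" by (rule qread_less)+
  with Cons.prems have "qbit n i p = qbit n j p" "qread n ps i = qread n ps j"
    by (auto simp: qread_Cons split: if_splits)
  with Cons.IH show ?case by simp
qed simp

lemma basis_index_eq_qreadI:
  assumes "i < 2 ^ n" "j < 2 ^ n" "\<forall>p<n. p \<notin> set ps \<longrightarrow> qbit n i p = qbit n j p"
    and "qread n ps i = qread n ps j"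
  shows "i = j"
  using qbit_eq_if_qread_eq[OF assms(4)] assms by (intro basis_index_eqI) auto

fun qwrite :: "nat \<Rightarrow> nat list \<Rightarrow> nat \<Rightarrow> nat \<Rightarrow> nat" where
  "qwrite n [] j a = j"
| "qwrite n (p # ps) j a = set_qbit n p (a div 2 ^ length ps = 1) (qwrite n ps j (a mod 2 ^ length ps))"

lemma qwrite_less: "set ps \<subseteq> {..<n} \<Longrightarrow> j < 2 ^ n \<Longrightarrow> qwrite n ps j a < 2 ^ n"
  by (induction ps arbitrary: a) (auto simp: set_qbit_less)

lemma qbit_qwrite_notin:
  "set ps \<subseteq> {..<n} \<Longrightarrow> p \<notin> set ps \<Longrightarrow> p < n \<Longrightarrow> qbit n (qwrite n ps j a) p = qbit n j p"
  by (induction ps arbitrary: a) (auto simp: qbit_set_qbit)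

lemma qbit_qwrite_head: "p < n \<Longrightarrow> qbit n (qwrite n (p # ps) j a) p = (a div 2 ^ length ps = 1)"
  by (simp add: qbit_set_qbit)

lemma qread_qwrite:
  "set ps \<subseteq> {..<n} \<Longrightarrow> distinct ps \<Longrightarrow> a < 2 ^ length ps \<Longrightarrow> qread n ps (qwrite n ps j a) = a"
proof (induction ps arbitrary: a)
  case (Cons p ps)
  let ?L = "length ps"
  have p: "p < n" "p \<notin> set ps" using Cons.prems by auto
  have "qread n ps (qwrite n (p # ps) j a) = qread n ps (qwrite n ps j (a mod 2 ^ ?L))"
    by (rule qread_cong) (use Cons.prems in \<open>auto simp: qbit_set_qbit subset_iff\<close>)
  also have "\<dots> = a mod 2 ^ ?L" using Cons by simp
  finally have tail: "qread n ps (qwrite n (p # ps) j a) = a mod 2 ^ ?L" .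
  have "a div 2 ^ ?L < 2" using Cons.prems(3) by (simp add: less_mult_imp_div_less)
  then have "a div 2 ^ ?L = 0 \<or> a div 2 ^ ?L = 1" by linarith
  moreover have "a = a div 2 ^ ?L * 2 ^ ?L + a mod 2 ^ ?L" by (metis div_mult_mod_eq)
  ultimately show ?case using tail qbit_qwrite_head[OF p(1)] by (auto simp: qread_Cons)
qed simp

lemma qwrite_qread:
  assumes "set ps \<subseteq> {..<n}" "distinct ps" "i < 2 ^ n" "j < 2 ^ n"
    and "\<forall>p<n. p \<notin> set ps \<longrightarrow> qbit n i p = qbit n j p"
  shows "qwrite n ps j (qread n ps i) = i"
  by (rule basis_index_eq_qreadI[where ps = ps])
     (use assms in \<open>auto simp: qwrite_less qbit_qwrite_notin qread_qwrite qread_less\<close>)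

lemma lift_carrier: "lift n ps U \<in> carrier_mat (2 ^ n) (2 ^ n)"
  by (simp add: lift_def)

lemma lift_entry:
  "i < 2 ^ n \<Longrightarrow> j < 2 ^ n \<Longrightarrow> lift n ps U $$ (i, j) =
    (if \<forall>p<n. p \<notin> set ps \<longrightarrow> qbit n i p = qbit n j p
     then U $$ (qread n ps i, qread n ps j) else 0)"
  by (simp add: lift_def)

lemma lift_nonzeroD:
  assumes "i < 2 ^ n" "k < 2 ^ n" "lift n ps U $$ (i, k) \<noteq> 0"
  shows "\<forall>p<n. p \<notin> set ps \<longrightarrow> qbit n i p = qbit n k p"
    and "U $$ (qread n ps i, qread n ps k) \<noteq> 0"
  using assms by (auto simp: lift_entry split: if_splits)

lemma sum_lift_col:
  assumes ps: "set ps \<subseteq> {..<n}" "distinct ps" and j: "j < 2 ^ n" and h0: "\<And>i. h i 0 = 0"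
  shows "(\<Sum>i<2 ^ n. h i (lift n ps U $$ (i, j))) =
         (\<Sum>a<2 ^ length ps. h (qwrite n ps j a) (U $$ (a, qread n ps j)))"
proof -
  define F where "F = {i. i < 2 ^ n \<and> (\<forall>p<n. p \<notin> set ps \<longrightarrow> qbit n i p = qbit n j p)}"
  have bij: "bij_betw (qwrite n ps j) {..<2 ^ length ps} F"
  proof (rule bij_betw_byWitness[where f' = "qread n ps"])
    show "\<forall>a\<in>{..<2 ^ length ps}. qread n ps (qwrite n ps j a) = a"
      using qread_qwrite ps by auto
    show "\<forall>i\<in>F. qwrite n ps j (qread n ps i) = i"
      using qwrite_qread[OF ps _ j] by (auto simp: F_def)
    show "qwrite n ps j ` {..<2 ^ length ps} \<subseteq> F"
      using ps j by (auto simp: F_def qwrite_less qbit_qwrite_notin)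
    show "qread n ps ` F \<subseteq> {..<2 ^ length ps}"
      using qread_less by auto
  qed
  have "(\<Sum>i<2 ^ n. h i (lift n ps U $$ (i, j))) = (\<Sum>i\<in>F. h i (lift n ps U $$ (i, j)))"
    by (rule sum.mono_neutral_right) (auto simp: F_def lift_entry j h0)
  also have "\<dots> = (\<Sum>i\<in>F. h i (U $$ (qread n ps i, qread n ps j)))"
    by (rule sum.cong) (auto simp: F_def lift_entry j)
  also have "\<dots> = (\<Sum>a<2 ^ length ps. h (qwrite n ps j a) (U $$ (qread n ps (qwrite n ps j a), qread n ps j)))"
    by (rule sum.reindex_bij_betw[OF bij, symmetric])
  also have "\<dots> = (\<Sum>a<2 ^ length ps. h (qwrite n ps j a) (U $$ (a, qread n ps j)))"
    by (rule sum.cong) (use qread_qwrite ps in auto)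
  finally show ?thesis .
qed

lemma lift_entry_qwrite:
  assumes "set ps \<subseteq> {..<n}" "distinct ps" "k < 2 ^ n" "a < 2 ^ length ps"
  shows "lift n ps U $$ (qwrite n ps k a, k) = U $$ (a, qread n ps k)"
  using assms by (simp add: lift_entry qwrite_less qbit_qwrite_notin qread_qwrite)

definition row_unique :: "nat \<Rightarrow> complex mat \<Rightarrow> bool" where
  "row_unique d G \<longleftrightarrow> (\<forall>i<d. \<forall>k<d. \<forall>k'<d. G $$ (i, k) \<noteq> 0 \<longrightarrow> G $$ (i, k') \<noteq> 0 \<longrightarrow> k = k')"

lemma row_unique_lift:
  assumes ps: "set ps \<subseteq> {..<n}" "distinct ps" and U: "row_unique (2 ^ length ps) U"
  shows "row_unique (2 ^ n) (lift n ps U)"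
  unfolding row_unique_def
proof (intro allI impI)
  fix i k k' assume ik: "i < 2 ^ n" "k < 2 ^ n" "k' < 2 ^ n"
    and nz: "lift n ps U $$ (i, k) \<noteq> 0" "lift n ps U $$ (i, k') \<noteq> 0"
  note a = lift_nonzeroD[OF ik(1,2) nz(1)] and b = lift_nonzeroD[OF ik(1,3) nz(2)]
  have "qread n ps k = qread n ps k'"
    using U[unfolded row_unique_def, rule_format, OF qread_less qread_less qread_less a(2) b(2)] .
  moreover have "\<forall>p<n. p \<notin> set ps \<longrightarrow> qbit n k p = qbit n k' p"
    using a(1) b(1) by auto
  ultimately show "k = k'" using basis_index_eq_qreadI[of k n k' ps] ik by blast
qed

subsection \<open>Transition probabilities and interference-free products\<close>

definition tprob :: "complex mat \<Rightarrow> nat \<Rightarrow> nat \<Rightarrow> real" where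
  "tprob M i j = (cmod (M $$ (i, j)))\<^sup>2"

lemma tprob_nonneg: "tprob M i j \<ge> 0"
  by (simp add: tprob_def)

definition interference_free :: "nat \<Rightarrow> complex mat \<Rightarrow> complex mat \<Rightarrow> nat \<Rightarrow> bool" where
  "interference_free d G M x \<longleftrightarrow> (\<forall>i<d. \<forall>k<d. \<forall>k'<d.
     G $$ (i, k) \<noteq> 0 \<longrightarrow> M $$ (k, x) \<noteq> 0 \<longrightarrow> G $$ (i, k') \<noteq> 0 \<longrightarrow> M $$ (k', x) \<noteq> 0 \<longrightarrow> k = k')"

lemma row_unique_imp_interference_free: "row_unique d G \<Longrightarrow> interference_free d G M x"
  by (simp add: row_unique_def interference_free_def)

lemma cmod_sum_sq_single_support:
  assumes "finite A" "\<forall>k\<in>A. \<forall>k'\<in>A. f k \<noteq> 0 \<longrightarrow> f k' \<noteq> 0 \<longrightarrow> k = k'"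
  shows "(cmod (sum f A))\<^sup>2 = (\<Sum>k\<in>A. (cmod (f k))\<^sup>2)"
proof (cases "\<exists>k0\<in>A. f k0 \<noteq> 0")
  case True
  then obtain k0 where k0: "k0 \<in> A" "f k0 \<noteq> 0" by blast
  have "\<forall>k\<in>A - {k0}. f k = 0" using assms(2) k0 by blast
  then show ?thesis
    using sum.remove[OF assms(1) k0(1), of f] sum.remove[OF assms(1) k0(1), of "\<lambda>k. (cmod (f k))\<^sup>2"]
    by simp
qed simp

lemma index_mult_mat_sum:
  "G \<in> carrier_mat d d \<Longrightarrow> M \<in> carrier_mat d d \<Longrightarrow> i < d \<Longrightarrow> x < d \<Longrightarrow>
    (G * M) $$ (i, x) = (\<Sum>k<d. G $$ (i, k) * M $$ (k, x))"
  by (simp add: index_mult_mat scalar_prod_def lessThan_atLeast0 row_def col_def)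

lemma mult_mat_nonzeroE:
  assumes "G \<in> carrier_mat d d" "M \<in> carrier_mat d d" "i < d" "x < d" "(G * M) $$ (i, x) \<noteq> 0"
  obtains k where "k < d" "G $$ (i, k) \<noteq> 0" "M $$ (k, x) \<noteq> 0"
proof -
  have "(\<Sum>k<d. G $$ (i, k) * M $$ (k, x)) \<noteq> 0"
    using assms(5) index_mult_mat_sum[OF assms(1-4)] by simp
  then show ?thesis using that by (rule sum.not_neutral_contains_not_neutral) auto
qed

lemma tprob_mult:
  assumes "G \<in> carrier_mat d d" "M \<in> carrier_mat d d" "i < d" "x < d"
    and "interference_free d G M x"
  shows "tprob (G * M) i x = (\<Sum>k<d. tprob G i k * tprob M k x)"
proof -
  have "tprob (G * M) i x = (cmod (\<Sum>k<d. G $$ (i, k) * M $$ (k, x)))\<^sup>2"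
    unfolding tprob_def by (subst index_mult_mat_sum[OF assms(1-4)]) (rule refl)
  also have "\<dots> = (\<Sum>k<d. (cmod (G $$ (i, k) * M $$ (k, x)))\<^sup>2)"
    by (rule cmod_sum_sq_single_support) (use assms(3,5) in \<open>auto simp: interference_free_def\<close>)
  also have "\<dots> = (\<Sum>k<d. tprob G i k * tprob M k x)"
    by (simp add: tprob_def norm_mult power_mult_distrib)
  finally show ?thesis .
qed

lemma sum_tprob_mult_ge:
  assumes G: "G \<in> carrier_mat d d" and M: "M \<in> carrier_mat d d" and x: "x < d"
    and free: "interference_free d G M x"
    and S: "S \<subseteq> {..<d}" and S': "S' \<subseteq> {..<d}" and c: "c \<ge> 0"
    and step: "\<And>k. k \<in> S \<Longrightarrow> M $$ (k, x) \<noteq> 0 \<Longrightarrow> c \<le> (\<Sum>i\<in>S'. tprob G i k)"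
  shows "c * (\<Sum>k\<in>S. tprob M k x) \<le> (\<Sum>i\<in>S'. tprob (G * M) i x)"
proof -
  have "(\<Sum>k\<in>S. c * tprob M k x) \<le> (\<Sum>k\<in>S. (\<Sum>i\<in>S'. tprob G i k) * tprob M k x)"
  proof (rule sum_mono)
    fix k assume k: "k \<in> S"
    show "c * tprob M k x \<le> (\<Sum>i\<in>S'. tprob G i k) * tprob M k x"
    proof (cases "M $$ (k, x) = 0")
      case False
      then show ?thesis using mult_right_mono[OF step[OF k] tprob_nonneg] by blast
    qed (simp add: tprob_def)
  qed
  also have "\<dots> \<le> (\<Sum>k<d. (\<Sum>i\<in>S'. tprob G i k) * tprob M k x)"
    by (rule sum_mono2) (use S in \<open>auto intro!: mult_nonneg_nonneg sum_nonneg tprob_nonneg\<close>)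
  also have "\<dots> = (\<Sum>i\<in>S'. \<Sum>k<d. tprob G i k * tprob M k x)"
    by (subst sum.swap) (simp add: sum_distrib_right)
  also have "\<dots> = (\<Sum>i\<in>S'. tprob (G * M) i x)"
    by (rule sum.cong) (use S' in \<open>auto intro!: tprob_mult[OF G M _ x free, symmetric]\<close>)
  finally show ?thesis by (simp add: sum_distrib_left)
qed

subsection \<open>Averages over the maximally mixed qubits\<close>

lemma qwrite_qwrite:
  assumes ps: "set ps \<subseteq> {..<n}" "distinct ps" and x: "x < 2 ^ n" "qread n ps x = b"
  shows "qwrite n ps (qwrite n ps x a) b = x"
  using qwrite_qread[OF ps x(1), of "qwrite n ps x a"] ps x by (simp add: qwrite_less qbit_qwrite_notin)

lemma bij_betw_qwrite_fibres:
  assumes ps: "set ps \<subseteq> {..<n}" "distinct ps" and "a < 2 ^ length ps" "b < 2 ^ length ps"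
  shows "bij_betw (\<lambda>x. qwrite n ps x a)
    {x \<in> {..<2 ^ n}. qread n ps x = b} {x \<in> {..<2 ^ n}. qread n ps x = a}"
  by (rule bij_betw_byWitness[where f' = "\<lambda>x. qwrite n ps x b"])
     (use assms in \<open>auto simp: qwrite_qwrite qwrite_less qread_qwrite\<close>)

text \<open>The qubits ps of the maximally mixed state are uniform and independent of the rest.\<close>

lemma sum_mult_qread:
  fixes g f :: "nat \<Rightarrow> real"
  assumes ps: "set ps \<subseteq> {..<n}" "distinct ps"
    and g: "\<And>i j. i < 2 ^ n \<Longrightarrow> j < 2 ^ n \<Longrightarrow>
              \<forall>p<n. p \<notin> set ps \<longrightarrow> qbit n i p = qbit n j p \<Longrightarrow> g i = g j"
  shows "(\<Sum>x<2 ^ n. g x * f (qread n ps x)) =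
         (\<Sum>a<2 ^ length ps. f a) / 2 ^ length ps * (\<Sum>x<2 ^ n. g x)"
proof -
  let ?L = "length ps"
  define fibre where "fibre a = {x \<in> {..<2 ^ n}. qread n ps x = a}" for a
  define C where "C = sum g (fibre 0)"
  have fibre_sum: "sum g (fibre a) = C" if a: "a < 2 ^ ?L" for a
  proof -
    have "sum g (fibre a) = (\<Sum>x\<in>fibre 0. g (qwrite n ps x a))"
      unfolding fibre_def by (rule sum.reindex_bij_betw[OF bij_betw_qwrite_fibres[OF ps a], symmetric]) simp
    also have "\<dots> = C"
      unfolding C_def using ps by (intro sum.cong refl g) (auto simp: fibre_def qwrite_less qbit_qwrite_notin)
    finally show ?thesis .
  qed
  have by_fibres: "(\<Sum>x<2 ^ n. h x) = (\<Sum>a<2 ^ ?L. sum h (fibre a))" for h :: "nat \<Rightarrow> real"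
    unfolding fibre_def by (rule sum.group[symmetric]) (auto simp: qread_less)
  have "(\<Sum>x<2 ^ n. g x * f (qread n ps x)) = (\<Sum>a<2 ^ ?L. \<Sum>x\<in>fibre a. g x * f a)"
    unfolding by_fibres by (intro sum.cong refl) (auto simp: fibre_def)
  also have "\<dots> = (\<Sum>a<2 ^ ?L. f a * C)"
  proof (rule sum.cong[OF refl])
    fix a :: nat assume "a \<in> {..<2 ^ ?L}"
    then have "sum g (fibre a) = C" by (simp add: fibre_sum)
    then show "(\<Sum>x\<in>fibre a. g x * f a) = f a * C"
      by (metis mult.commute sum_distrib_right)
  qed
  also have "\<dots> = (\<Sum>a<2 ^ ?L. f a) * C"
    by (simp add: sum_distrib_right)
  finally show ?thesis using by_fibres[of g] fibre_sum by simp
qed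

lemma sum_not_qbit_0:
  assumes "n \<ge> 1"
  shows "(\<Sum>x<2 ^ n. if qbit n x 0 then 0 else 1 :: real) = 2 ^ (n - 1)"
proof -
  let ?f = "\<lambda>a. if a = 0 then 1 else 0 :: real"
  have "(\<Sum>x<(2::nat) ^ n. 1 * ?f (qread n [0] x)) =
        (\<Sum>a<(2::nat) ^ length [0::nat]. ?f a) / 2 ^ length [0::nat] * (\<Sum>x<(2::nat) ^ n. 1)"
    by (rule sum_mult_qread) (use assms in auto)
  moreover have "?f (qread n [0] x) = (if qbit n x 0 then 0 else 1)" for x
    by (simp add: qread_Cons)
  ultimately have "(\<Sum>x<2 ^ n. if qbit n x 0 then 0 else 1 :: real) = 2 ^ n / 2"
    by simp
  also have "\<dots> = 2 ^ (n - 1)" using assms by (cases n) auto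
  finally show ?thesis .
qed

lemma sum_not_qbit_0_prod_qread:
  fixes f :: "nat \<Rightarrow> nat \<Rightarrow> real"
  assumes n: "n \<ge> 1"
    and P: "\<And>t. t < T \<Longrightarrow> set (P t) \<subseteq> {..<n} \<and> distinct (P t) \<and> 0 \<notin> set (P t)"
    and disj: "\<And>t s. t < T \<Longrightarrow> s < T \<Longrightarrow> t \<noteq> s \<Longrightarrow> set (P t) \<inter> set (P s) = {}"
  shows "(\<Sum>x<2 ^ n. (if qbit n x 0 then 0 else 1) * (\<Prod>t<T. f t (qread n (P t) x))) =
         2 ^ (n - 1) * (\<Prod>t<T. (\<Sum>a<2 ^ length (P t). f t a) / 2 ^ length (P t))"
  using P disj
proof (induction T)
  case 0
  then show ?case using sum_not_qbit_0[OF n] by simp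
next
  case (Suc T)
  let ?g = "\<lambda>x. (if qbit n x 0 then 0 else 1) * (\<Prod>t<T. f t (qread n (P t) x))"
  have PT: "set (P T) \<subseteq> {..<n}" "distinct (P T)" "0 \<notin> set (P T)" using Suc.prems(1)[of T] by auto
  have "(\<Sum>x<2 ^ n. (if qbit n x 0 then 0 else 1) * (\<Prod>t<Suc T. f t (qread n (P t) x))) =
        (\<Sum>x<2 ^ n. ?g x * f T (qread n (P T) x))"
    by (simp add: mult.assoc)
  also have "\<dots> = (\<Sum>a<2 ^ length (P T). f T a) / 2 ^ length (P T) * (\<Sum>x<2 ^ n. ?g x)"
  proof (rule sum_mult_qread[OF PT(1,2)])
    fix i j assume ij: "i < 2 ^ n" "j < 2 ^ n"
      and outside: "\<forall>p<n. p \<notin> set (P T) \<longrightarrow> qbit n i p = qbit n j p"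
    have "qbit n i 0 = qbit n j 0" using outside PT(3) n by auto
    moreover have "qread n (P t) i = qread n (P t) j" if t: "t < T" for t
    proof (rule qread_cong, intro ballI)
      fix p assume p: "p \<in> set (P t)"
      then have "p \<notin> set (P T)" "p < n" using Suc.prems(1)[of t] Suc.prems(2)[of t T] t by auto
      then show "qbit n i p = qbit n j p" using outside by auto
    qed
    ultimately show "?g i = ?g j" by simp
  qed
  also have "(\<Sum>x<2 ^ n. ?g x) = 2 ^ (n - 1) * (\<Prod>t<T. (\<Sum>a<2 ^ length (P t). f t a) / 2 ^ length (P t))"
    using Suc by simp
  finally show ?case by (simp add: mult_ac)
qed

lemma cadj_carrier: "M \<in> carrier_mat d d \<Longrightarrow> cadj M \<in> carrier_mat d d"
  by (simp add: cadj_def)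

lemma cadj_entry: "M \<in> carrier_mat d d \<Longrightarrow> i < d \<Longrightarrow> j < d \<Longrightarrow> cadj M $$ (i, j) = cnj (M $$ (j, i))"
  by (simp add: cadj_def)

lemma mult_cnj_eq_tprob: "M $$ (i, j) * cnj (M $$ (i, j)) = of_real (tprob M i j)"
  by (simp only: tprob_def complex_mult_cnj cmod_power2)

lemma cnj_mult_eq_tprob: "cnj (M $$ (i, j)) * M $$ (i, j) = of_real (tprob M i j)"
  by (simp only: mult.commute[of "cnj _"] mult_cnj_eq_tprob)

lemma p_acc_1_eq_sum_tprob:
  assumes M: "M \<in> carrier_mat (2 ^ n) (2 ^ n)" and n: "n \<ge> 1"
  shows "p_acc n M 1 = (\<Sum>i<2 ^ n. \<Sum>x<2 ^ n.
    (if qbit n i 0 then 0 else 1) * (if qbit n x 0 then 0 else 1) * tprob M i x) / 2 ^ (n - 1)"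
proof -
  let ?d = "2 ^ n :: nat"
  let ?P = "Pi_acc n" and ?r = "rho_init n 1"
  let ?a = "\<lambda>i. if qbit n i 0 then 0 else 1 :: real"
  have Pc: "?P \<in> carrier_mat ?d ?d" and rc: "?r \<in> carrier_mat ?d ?d"
    by (auto simp: Pi_acc_def rho_init_def)
  have PMc: "?P * M \<in> carrier_mat ?d ?d" and PMrc: "?P * M * ?r \<in> carrier_mat ?d ?d"
    using Pc M rc by auto
  have PM: "(?P * M) $$ (i, k) = of_real (?a i) * M $$ (i, k)" if "i < ?d" "k < ?d" for i k
  proof -
    have "(?P * M) $$ (i, k) = (\<Sum>j<?d. if j = i then of_real (?a i) * M $$ (i, k) else 0)"
      by (subst index_mult_mat_sum[OF Pc M that]) (rule sum.cong, auto simp: Pi_acc_def that)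
    then show ?thesis using that by simp
  qed
  have PMr: "(?P * M * ?r) $$ (i, x) = of_real (?a i * ?a x / 2 ^ (n - 1)) * M $$ (i, x)"
    if "i < ?d" "x < ?d" for i x
  proof -
    have "(?P * M * ?r) $$ (i, x) = (\<Sum>k<?d. if k = x then of_real (?a i * ?a x / 2 ^ (n - 1)) * M $$ (i, x) else 0)"
      by (subst index_mult_mat_sum[OF PMc rc that]) (rule sum.cong, auto simp: rho_init_def PM that)
    then show ?thesis using that by simp
  qed
  have diag: "(?P * M * ?r * cadj M) $$ (i, i) = (\<Sum>x<?d. of_real (?a i * ?a x / 2 ^ (n - 1) * tprob M i x))"
    if i: "i < ?d" for i
  proof (subst index_mult_mat_sum[OF PMrc cadj_carrier[OF M] i i], rule sum.cong[OF refl])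
    fix x assume "x \<in> {..<?d}"
    then have x: "x < ?d" by simp
    show "(?P * M * ?r) $$ (i, x) * cadj M $$ (x, i) = of_real (?a i * ?a x / 2 ^ (n - 1) * tprob M i x)"
      by (simp only: PMr[OF i x] cadj_entry[OF M x i] mult.assoc mult_cnj_eq_tprob of_real_mult)
  qed
  have "mtrace (?P * M * ?r * cadj M) = (\<Sum>i<?d. (?P * M * ?r * cadj M) $$ (i, i))"
    using Pc by (simp add: mtrace_def)
  also have "\<dots> = (\<Sum>i<?d. \<Sum>x<?d. of_real (?a i * ?a x / 2 ^ (n - 1) * tprob M i x))"
    by (rule sum.cong[OF refl], rule diag) simp
  finally show ?thesis by (simp add: p_acc_def sum_divide_distrib)
qed

lemma unitary_col_tprob_sum:
  assumes "is_unitary D U" "c < D"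
  shows "(\<Sum>a<D. tprob U a c) = 1"
proof -
  have U: "U \<in> carrier_mat D D" and u: "cadj U * U = 1\<^sub>m D"
    using assms(1) by (simp_all add: is_unitary_def)
  have "complex_of_real (\<Sum>a<D. tprob U a c) = (\<Sum>a<D. cadj U $$ (c, a) * U $$ (a, c))"
    unfolding of_real_sum by (rule sum.cong) (simp_all add: cadj_entry[OF U] assms(2) cnj_mult_eq_tprob)
  also have "\<dots> = 1"
    using index_mult_mat_sum[OF cadj_carrier[OF U] U assms(2,2)] u assms(2) by simp
  finally show ?thesis by (metis of_real_eq_1_iff)
qed

lemma unitary_row_tprob_sum:
  assumes "is_unitary D U" "a < D"
  shows "(\<Sum>c<D. tprob U a c) = 1"
proof -
  have U: "U \<in> carrier_mat D D" and u: "U * cadj U = 1\<^sub>m D"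
    using assms(1) by (simp_all add: is_unitary_def)
  have "complex_of_real (\<Sum>c<D. tprob U a c) = (\<Sum>c<D. U $$ (a, c) * cadj U $$ (c, a))"
    unfolding of_real_sum by (rule sum.cong) (simp_all add: cadj_entry[OF U] assms(2) mult_cnj_eq_tprob)
  also have "\<dots> = 1"
    using index_mult_mat_sum[OF U cadj_carrier[OF U] assms(2,2)] u assms(2) by simp
  finally show ?thesis by (metis of_real_eq_1_iff)
qed

lemma sum_lessThan_double_split:
  fixes f :: "nat \<Rightarrow> real"
  shows "(\<Sum>a<2 * H. f a) = (\<Sum>a<H. f a) + (\<Sum>a\<in>{H..<2 * H}. f a)"
  by (simp add: lessThan_atLeast0 sum.atLeastLessThan_concat)

text \<open>Both diagonal blocks of a unitary carry the weight H minus that of an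
off-diagonal block.\<close>

lemma unitary_tprob_diag_blocks_eq:
  assumes U: "is_unitary (2 * H) U"
  shows "(\<Sum>a\<in>{H..<2 * H}. \<Sum>c\<in>{H..<2 * H}. tprob U a c) = (\<Sum>a<H. \<Sum>c<H. tprob U a c)"
proof -
  let ?hi = "{H..<2 * H}"
  have col: "(\<Sum>a<H. tprob U a c) + (\<Sum>a\<in>?hi. tprob U a c) = 1" if "c < 2 * H" for c
    using unitary_col_tprob_sum[OF U that] by (simp only: sum_lessThan_double_split)
  have row: "(\<Sum>c<H. tprob U a c) + (\<Sum>c\<in>?hi. tprob U a c) = 1" if "a < 2 * H" for a
    using unitary_row_tprob_sum[OF U that] by (simp only: sum_lessThan_double_split)
  have cols: "(\<Sum>c\<in>?hi. (\<Sum>a<H. tprob U a c) + (\<Sum>a\<in>?hi. tprob U a c)) = real H"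
    using col by (subst sum.cong[OF refl, of _ _ "\<lambda>_. 1"]) auto
  have rows: "(\<Sum>a<H. (\<Sum>c<H. tprob U a c) + (\<Sum>c\<in>?hi. tprob U a c)) = real H"
    using row by (subst sum.cong[OF refl, of _ _ "\<lambda>_. 1"]) auto
  have "(\<Sum>c\<in>?hi. \<Sum>a<H. tprob U a c) = (\<Sum>a<H. \<Sum>c\<in>?hi. tprob U a c)"
    by (rule sum.swap)
  moreover have "(\<Sum>c\<in>?hi. \<Sum>a\<in>?hi. tprob U a c) = (\<Sum>a\<in>?hi. \<Sum>c\<in>?hi. tprob U a c)"
    by (rule sum.swap)
  ultimately show ?thesis using cols rows unfolding sum.distrib by linarith
qed

lemma p_acc_1_eq_block:
  assumes M: "M \<in> carrier_mat (2 ^ n) (2 ^ n)" and n: "n \<ge> 1"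
  shows "p_acc n M 1 = (\<Sum>i<2 ^ (n - 1). \<Sum>x<2 ^ (n - 1). tprob M i x) / 2 ^ (n - 1)"
proof -
  let ?H = "2 ^ (n - 1) :: nat"
  have two: "(2::nat) ^ n = 2 * ?H" using n by (cases n) auto
  have "(\<Sum>i<2 ^ n. \<Sum>x<2 ^ n. (if qbit n i 0 then 0 else 1) * (if qbit n x 0 then 0 else 1) * tprob M i x)
     = (\<Sum>i<2 ^ n. \<Sum>x<2 ^ n. if i < ?H \<and> x < ?H then tprob M i x else 0)"
    by (intro sum.cong refl) (simp add: qbit_0_iff_ge[OF _ n] not_le)
  also have "\<dots> = (\<Sum>i<?H. \<Sum>x<2 ^ n. if i < ?H \<and> x < ?H then tprob M i x else 0)"
    by (rule sum.mono_neutral_right) (auto simp: two)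
  also have "\<dots> = (\<Sum>i<?H. \<Sum>x<?H. tprob M i x)"
  proof (rule sum.cong[OF refl])
    fix i assume i: "i \<in> {..<?H}"
    have "(\<Sum>x<2 ^ n. if i < ?H \<and> x < ?H then tprob M i x else 0) =
          (\<Sum>x<?H. if i < ?H \<and> x < ?H then tprob M i x else 0)"
      by (rule sum.mono_neutral_right) (auto simp: two)
    then show "(\<Sum>x<2 ^ n. if i < ?H \<and> x < ?H then tprob M i x else 0) = (\<Sum>x<?H. tprob M i x)"
      using i by simp
  qed
  finally show ?thesis unfolding p_acc_1_eq_sum_tprob[OF M n] by simp
qed

text \<open>CNOT permutes the basis states |control, target> by swapping 2 and 3.\<close>

definition cnot_perm :: "nat \<Rightarrow> nat" where
  "cnot_perm c = (if c < 2 then c else 5 - c)"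

lemma cnot_perm_less: "c < 4 \<Longrightarrow> cnot_perm c < 4"
  unfolding cnot_perm_def by auto

lemma CNOT_entry:
  assumes "a < 4" "c < 4"
  shows "CNOT $$ (a, c) = (if a = cnot_perm c then 1 else 0)"
proof -
  have a: "a = 0 \<or> a = 1 \<or> a = 2 \<or> a = 3" and c: "c = 0 \<or> c = 1 \<or> c = 2 \<or> c = 3"
    using assms by linarith+
  have "a < 2 ^ (1 + 1)" "c < 2 ^ (1 + 1)" using assms by simp_all
  then have e: "CNOT $$ (a, c) = (if a < 2 ^ 1 \<and> c < 2 ^ 1 then (if a = c then 1 else 0)
     else if 2 ^ 1 \<le> a \<and> 2 ^ 1 \<le> c then pauli_X $$ (a - 2 ^ 1, c - 2 ^ 1) else 0)"
    unfolding CNOT_def controlled_def by (simp only: index_mat(1) case_prod_conv)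
  have X: "pauli_X $$ (u, v) = (if u \<noteq> v then 1 else 0)" if "u < 2" "v < 2" for u v
    unfolding pauli_X_def using that by (simp only: index_mat(1) case_prod_conv)
  show ?thesis using a c unfolding e cnot_perm_def by (elim disjE) (simp_all add: X)
qed

lemma row_unique_CNOT: "row_unique 4 CNOT"
  unfolding row_unique_def
proof (intro allI impI)
  fix a c c' :: nat assume "a < 4" "c < 4" "c' < 4" "CNOT $$ (a, c) \<noteq> 0" "CNOT $$ (a, c') \<noteq> 0"
  then have "cnot_perm c = cnot_perm c'" "c < 4" "c' < 4"
    using CNOT_entry[of a c] CNOT_entry[of a c'] by (auto split: if_splits)
  then show "c = c'" by (auto simp: cnot_perm_def less_Suc_eq numeral_eq_Suc split: if_splits)
qed

lemma qbit_cnot: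
  assumes "qread n [p, q] k = cnot_perm (qread n [p, q] k')"
  shows "qbit n k p = qbit n k' p" and "qbit n k q = (qbit n k' q \<noteq> qbit n k' p)"
  using assms unfolding qread_Cons qread_Nil cnot_perm_def
  by (cases "qbit n k p"; cases "qbit n k q"; cases "qbit n k' p"; cases "qbit n k' q"; simp)+

definition cincr_perm :: "nat \<Rightarrow> nat \<Rightarrow> nat" where
  "cincr_perm L c = (if c < 2 ^ L then c else 2 ^ L + (c - 2 ^ L + 1) mod 2 ^ L)"

lemma cincr_perm_less:
  "c < 2 ^ Suc L \<Longrightarrow> cincr_perm L c < 2 ^ Suc L \<and> (cincr_perm L c < 2 ^ L \<longleftrightarrow> c < 2 ^ L)"
proof (cases "c < 2 ^ L")
  case False
  have "(c - 2 ^ L + 1) mod 2 ^ L < (2::nat) ^ L" by simp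
  then show ?thesis using False by (simp add: cincr_perm_def)
qed (simp add: cincr_perm_def)

lemma controlled_incr_entry:
  assumes a: "a < 2 ^ Suc L" and c: "c < 2 ^ Suc L"
  shows "controlled L (incr (2 ^ L)) $$ (a, c) = (if a = cincr_perm L c then 1 else 0)"
proof -
  have e: "controlled L (incr (2 ^ L)) $$ (a, c) = (if a < 2 ^ L \<and> c < 2 ^ L then (if a = c then 1 else 0)
     else if 2 ^ L \<le> a \<and> 2 ^ L \<le> c then incr (2 ^ L) $$ (a - 2 ^ L, c - 2 ^ L) else 0)"
    unfolding controlled_def using a c by (simp only: index_mat(1) Suc_eq_plus1 case_prod_conv)
  show ?thesis
  proof (cases "c < 2 ^ L")
    case False
    have a2: "a - 2 ^ L < 2 ^ L" "c - 2 ^ L < 2 ^ L" using a c by auto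
    have m: "(c - 2 ^ L + 1) mod 2 ^ L < (2::nat) ^ L" by simp
    show ?thesis
    proof (cases "a < 2 ^ L")
      case False2: False
      have "incr (2 ^ L) $$ (a - 2 ^ L, c - 2 ^ L) = (if a - 2 ^ L = (c - 2 ^ L + 1) mod 2 ^ L then 1 else 0)"
        unfolding incr_def using a2 by (simp only: index_mat(1) case_prod_conv)
      then show ?thesis unfolding e using False False2 by (auto simp: cincr_perm_def)
    qed (use False m in \<open>auto simp: e cincr_perm_def\<close>)
  qed (auto simp: e cincr_perm_def)
qed

lemma cincr_perm_inj:
  assumes c: "c < 2 ^ Suc L" and c': "c' < 2 ^ Suc L" and eq: "cincr_perm L c = cincr_perm L c'"
  shows "c = c'"
proof -
  have same: "c < 2 ^ L \<longleftrightarrow> c' < 2 ^ L" using cincr_perm_less[OF c] cincr_perm_less[OF c'] eq by metis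
  have succ_mod: "(x + 1) mod 2 ^ L = (if x + 1 = 2 ^ L then 0 else x + 1)" if "x < (2::nat) ^ L" for x
    using that by auto
  show ?thesis
  proof (cases "c < 2 ^ L")
    case False
    then have "(c - 2 ^ L + 1) mod 2 ^ L = (c' - 2 ^ L + 1) mod 2 ^ L" "\<not> c' < 2 ^ L"
      using eq same by (simp_all add: cincr_perm_def)
    moreover have "c - 2 ^ L < 2 ^ L" "c' - 2 ^ L < 2 ^ L" using c c' by auto
    ultimately have "c - 2 ^ L = c' - 2 ^ L" using succ_mod by (auto split: if_splits)
    then show ?thesis using False \<open>\<not> c' < 2 ^ L\<close> by simp
  qed (use eq same in \<open>simp add: cincr_perm_def\<close>)
qed

lemma row_unique_controlled_incr: "row_unique (2 ^ Suc L) (controlled L (incr (2 ^ L)))"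
  unfolding row_unique_def
proof (intro allI impI)
  fix a c c' assume "a < 2 ^ Suc L" "c < 2 ^ Suc L" "c' < 2 ^ Suc L"
    "controlled L (incr (2 ^ L)) $$ (a, c) \<noteq> 0" "controlled L (incr (2 ^ L)) $$ (a, c') \<noteq> 0"
  then show "c = c'"
    using controlled_incr_entry[of a L c] controlled_incr_entry[of a L c'] cincr_perm_inj[of c L c']
    by (auto split: if_splits)
qed

locale R1_circuit =
  fixes w m :: nat and Q :: "complex mat"
  assumes w_pos: "w \<ge> 1" and Q_circuit: "is_circuit w Q"
begin

definition "nq = R1_nqubits w m"
definition "D = (2::nat) ^ nq"
definition "l = m + 1"
definition "twoN = 2 * 2 ^ m"

text \<open>Step t < 2N acts on the register R_(t+1), which occupies the w - 1 qubits from base t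
on, and on the qubit X_(t+1) right after it.\<close>

definition "base t = l + 1 + t * w"
definition "Rreg t = [base t ..< base t + (w - 1)]"
definition "Xq t = base t + (w - 1)"

definition "gate_Q t = lift nq (l # Rreg t) Q"
definition "gate_CNOT t = lift nq [l, Xq t] CNOT"
definition "gate_incr = lift nq (l # [0..<l]) (controlled l (incr (2 ^ l)))"

abbreviation "U t \<equiv> R1_upto w m Q t"
definition "U_Q t = gate_Q t * U t"
definition "U_CNOT t = gate_CNOT t * U_Q t"

lemma twoN_eq: "twoN = 2 ^ l"
  by (simp add: twoN_def l_def)

lemma nq_eq: "nq = l + 1 + twoN * w"
  by (simp add: nq_def R1_nqubits_def l_def twoN_def)

lemma base_mono: "t < s \<Longrightarrow> base t + w \<le> base s"
proof -
  assume "t < s"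
  then have "Suc t * w \<le> s * w" by (intro mult_right_mono) auto
  then show ?thesis by (simp add: base_def)
qed

lemma base_bound: "t < twoN \<Longrightarrow> base t + w \<le> nq"
  using base_mono[of t twoN] by (simp add: base_def nq_eq)

lemma l_less_nq: "l < nq" by (simp add: nq_eq)
lemma l_less_base: "l < base t" by (simp add: base_def)
lemma base_le_Xq: "base t \<le> Xq t" by (simp add: Xq_def)
lemma base_Suc: "base (Suc t) = Xq t + 1" using w_pos by (simp add: base_def Xq_def)
lemma Xq_less_nq: "t < twoN \<Longrightarrow> Xq t < nq" using base_bound w_pos by (fastforce simp: Xq_def)
lemma set_Rreg: "set (Rreg t) = {base t ..< base t + (w - 1)}" by (simp add: Rreg_def)
lemma length_Rreg: "length (Rreg t) = w - 1" by (simp add: Rreg_def)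
lemma Rreg_less_nq: "t < twoN \<Longrightarrow> set (Rreg t) \<subseteq> {..<nq}" using base_bound by (fastforce simp: set_Rreg)

lemma gate_Q_qubits: "t < twoN \<Longrightarrow> set (l # Rreg t) \<subseteq> {..<nq} \<and> distinct (l # Rreg t)"
  using Rreg_less_nq l_less_nq l_less_base[of t] by (simp add: Rreg_def)

lemma gate_CNOT_qubits: "t < twoN \<Longrightarrow> set [l, Xq t] \<subseteq> {..<nq} \<and> distinct [l, Xq t]"
  using Xq_less_nq l_less_nq l_less_base[of t] base_le_Xq[of t] by auto

lemma gate_incr_qubits: "set (l # [0..<l]) \<subseteq> {..<nq} \<and> distinct (l # [0..<l])"
  using l_less_nq by auto

lemma gate_carriers:
  "gate_Q t \<in> carrier_mat D D" "gate_CNOT t \<in> carrier_mat D D" "gate_incr \<in> carrier_mat D D"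
  by (simp_all add: gate_Q_def gate_CNOT_def gate_incr_def D_def lift_carrier)

lemma R1_step_eq: "R1_step w m Q t = gate_incr * gate_CNOT t * gate_Q t"
  by (simp add: R1_step_def Let_def gate_incr_def gate_CNOT_def gate_Q_def nq_def l_def Rreg_def
      Xq_def base_def power_Suc)

lemma U_carrier: "U t \<in> carrier_mat D D"
proof (induction t)
  case (Suc t)
  then show ?case using gate_carriers by (simp add: R1_step_eq) (meson mult_carrier_mat)
qed (simp add: D_def nq_def)

lemma U_Q_carrier: "U_Q t \<in> carrier_mat D D"
  unfolding U_Q_def using gate_carriers U_carrier by (meson mult_carrier_mat)

lemma U_CNOT_carrier: "U_CNOT t \<in> carrier_mat D D"
  unfolding U_CNOT_def using gate_carriers U_Q_carrier by (meson mult_carrier_mat)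

lemma U_Suc: "U (Suc t) = gate_incr * U_CNOT t"
proof -
  have "U (Suc t) = gate_incr * gate_CNOT t * gate_Q t * U t"
    by (simp add: R1_step_eq)
  also have "\<dots> = gate_incr * (gate_CNOT t * (gate_Q t * U t))"
    using gate_carriers U_carrier by (metis assoc_mult_mat mult_carrier_mat)
  finally show ?thesis by (simp add: U_CNOT_def U_Q_def)
qed

definition "counter i = qread nq [0..<l] i"

lemma counter_less: "counter i < twoN"
  using qread_less[of nq "[0..<l]" i] by (simp add: counter_def twoN_eq)

lemma counter_cincr:
  assumes "qread nq (l # [0..<l]) i = cincr_perm l (qread nq (l # [0..<l]) k)"
  shows "qbit nq i l = qbit nq k l"
    and "counter i = (if qbit nq k l then (counter k + 1) mod twoN else counter k)"
proof -
  have read: "qread nq (l # [0..<l]) j = (if qbit nq j l then 2 ^ l else 0) + counter j" for j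
    by (simp add: qread_Cons counter_def)
  have less: "counter j < 2 ^ l" for j using counter_less by (simp add: twoN_eq)
  have "qbit nq i l = qbit nq k l \<and> counter i = (if qbit nq k l then (counter k + 1) mod twoN else counter k)"
  proof (cases "qbit nq k l")
    case True
    then have "qread nq (l # [0..<l]) i = 2 ^ l + (counter k + 1) mod 2 ^ l"
      using assms by (simp add: read cincr_perm_def)
    then show ?thesis using True less[of i] by (auto simp: read twoN_eq split: if_splits)
  next
    case False
    then have "qread nq (l # [0..<l]) i = counter k"
      using assms less[of k] by (simp add: read cincr_perm_def)
    then show ?thesis using False less[of k] by (auto simp: read split: if_splits)
  qed
  then show "qbit nq i l = qbit nq k l"
    and "counter i = (if qbit nq k l then (counter k + 1) mod twoN else counter k)" by simp_all
qed

definition "agree_from b k x \<longleftrightarrow> (\<forall>p. b \<le> p \<longrightarrow> p < nq \<longrightarrow> qbit nq k p = qbit nq x p)"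

text \<open>The qubits from base t on are untouched by the first t steps, and after step t the
qubit X_t holds its initial value xor the current value of Q.\<close>

definition "supp_inv t \<longleftrightarrow> (\<forall>k<D. \<forall>x<D. U t $$ (k, x) \<noteq> 0 \<longrightarrow> agree_from (base t) k x \<and>
   qbit nq k l = (if t = 0 then qbit nq x l else qbit nq k (Xq (t - 1)) \<noteq> qbit nq x (Xq (t - 1))))"

lemma gate_CNOT_nonzeroD:
  assumes "t < twoN" "k < D" "k' < D" "gate_CNOT t $$ (k, k') \<noteq> 0"
  shows "\<forall>p<nq. p \<notin> {l, Xq t} \<longrightarrow> qbit nq k p = qbit nq k' p"
    and "qbit nq k l = qbit nq k' l" "qbit nq k (Xq t) = (qbit nq k' (Xq t) \<noteq> qbit nq k' l)"
proof -
  note nz = lift_nonzeroD[of k nq k' "[l, Xq t]" CNOT]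
  show "\<forall>p<nq. p \<notin> {l, Xq t} \<longrightarrow> qbit nq k p = qbit nq k' p"
    using nz(1) assms by (simp add: gate_CNOT_def D_def)
  have "qread nq [l, Xq t] i < 4" for i using qread_less[of nq "[l, Xq t]" i] by simp
  then have "qread nq [l, Xq t] k = cnot_perm (qread nq [l, Xq t] k')"
    using nz(2) assms CNOT_entry by (fastforce simp: gate_CNOT_def D_def split: if_splits)
  then show "qbit nq k l = qbit nq k' l" "qbit nq k (Xq t) = (qbit nq k' (Xq t) \<noteq> qbit nq k' l)"
    by (rule qbit_cnot)+
qed

lemma gate_incr_nonzeroD:
  assumes "k < D" "k' < D" "gate_incr $$ (k, k') \<noteq> 0"
  shows "\<forall>p<nq. p \<notin> set (l # [0..<l]) \<longrightarrow> qbit nq k p = qbit nq k' p"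
    and "qbit nq k l = qbit nq k' l"
proof -
  let ?ps = "l # [0..<l]"
  note nz = lift_nonzeroD[of k nq k' ?ps "controlled l (incr (2 ^ l))"]
  show "\<forall>p<nq. p \<notin> set ?ps \<longrightarrow> qbit nq k p = qbit nq k' p"
    using nz(1) assms by (simp add: gate_incr_def D_def)
  have r: "qread nq ?ps i < 2 ^ Suc l" for i using qread_less[of nq ?ps i] by simp
  have "qread nq ?ps k = cincr_perm l (qread nq ?ps k')"
    using nz(2) assms controlled_incr_entry[OF r r] by (simp add: gate_incr_def D_def split: if_splits)
  then show "qbit nq k l = qbit nq k' l" by (rule counter_cincr(1))
qed

lemma U_Q_nonzeroD:
  assumes t: "t < twoN" and inv: "supp_inv t" and k: "k < D" and x: "x < D"
    and nz: "U_Q t $$ (k, x) \<noteq> 0"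
  shows "agree_from (Xq t) k x"
proof -
  obtain k' where k': "k' < D" "gate_Q t $$ (k, k') \<noteq> 0" "U t $$ (k', x) \<noteq> 0"
    using mult_mat_nonzeroE[OF gate_carriers(1) U_carrier k x] nz by (auto simp: U_Q_def)
  have outside: "\<forall>p<nq. p \<notin> set (l # Rreg t) \<longrightarrow> qbit nq k p = qbit nq k' p"
    using lift_nonzeroD(1)[of k nq k' "l # Rreg t" Q] k k'(1,2) by (simp add: gate_Q_def D_def)
  have "agree_from (base t) k' x" using inv k'(1,3) x by (simp add: supp_inv_def)
  moreover have "p \<notin> set (l # Rreg t)" if "Xq t \<le> p" for p
    using that l_less_base[of t] base_le_Xq[of t] by (auto simp: set_Rreg Xq_def)
  ultimately show ?thesis using outside base_le_Xq[of t] by (auto simp: agree_from_def)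
qed

lemma U_CNOT_nonzeroD:
  assumes t: "t < twoN" and inv: "supp_inv t" and k: "k < D" and x: "x < D"
    and nz: "U_CNOT t $$ (k, x) \<noteq> 0"
  shows "agree_from (base (Suc t)) k x" and "qbit nq k l = (qbit nq k (Xq t) \<noteq> qbit nq x (Xq t))"
proof -
  obtain k' where k': "k' < D" "gate_CNOT t $$ (k, k') \<noteq> 0" "U_Q t $$ (k', x) \<noteq> 0"
    using mult_mat_nonzeroE[OF gate_carriers(2) U_Q_carrier k x] nz by (auto simp: U_CNOT_def)
  note g = gate_CNOT_nonzeroD[OF t k k'(1,2)]
  have agree: "agree_from (Xq t) k' x" by (rule U_Q_nonzeroD[OF t inv k'(1) x k'(3)])
  have "p \<notin> {l, Xq t}" if "base (Suc t) \<le> p" for p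
    using that l_less_base[of t] base_le_Xq[of t] base_Suc[of t] by auto
  then show "agree_from (base (Suc t)) k x"
    using agree g(1) base_Suc[of t] by (auto simp: agree_from_def)
  show "qbit nq k l = (qbit nq k (Xq t) \<noteq> qbit nq x (Xq t))"
    using agree g(2,3) Xq_less_nq[OF t] by (auto simp: agree_from_def)
qed

lemma supp_inv_Suc:
  assumes t: "t < twoN" and inv: "supp_inv t"
  shows "supp_inv (Suc t)"
  unfolding supp_inv_def
proof (intro allI impI)
  fix k x assume k: "k < D" and x: "x < D" and nz: "U (Suc t) $$ (k, x) \<noteq> 0"
  obtain k' where k': "k' < D" "gate_incr $$ (k, k') \<noteq> 0" "U_CNOT t $$ (k', x) \<noteq> 0"
    using mult_mat_nonzeroE[OF gate_carriers(3) U_CNOT_carrier k x nz[unfolded U_Suc]] by blast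
  note g = gate_incr_nonzeroD[OF k k'(1,2)] and c = U_CNOT_nonzeroD[OF t inv k'(1) x k'(3)]
  have "p \<notin> set (l # [0..<l])" if "base (Suc t) \<le> p" for p
    using that l_less_base[of "Suc t"] by auto
  then have "agree_from (base (Suc t)) k x" using g(1) c(1) by (auto simp: agree_from_def)
  moreover have "qbit nq k (Xq t) = qbit nq k' (Xq t)"
    using g(1) Xq_less_nq[OF t] l_less_base[of t] base_le_Xq[of t] by auto
  ultimately show "agree_from (base (Suc t)) k x \<and> qbit nq k l =
      (if Suc t = 0 then qbit nq x l else qbit nq k (Xq (Suc t - 1)) \<noteq> qbit nq x (Xq (Suc t - 1)))"
    using g(2) c(2) by simp
qed

lemma supp_inv: "t \<le> twoN \<Longrightarrow> supp_inv t"
proof (induction t)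
  case 0
  then show ?case by (auto simp: supp_inv_def agree_from_def D_def nq_def)
qed (simp add: supp_inv_Suc)

text \<open>R_(t+1) is still untouched and the value of Q is recorded in X_t, so two states of a
column of the first t steps cannot differ only on the qubits read by the next copy of Q.\<close>

lemma U_col_eqI:
  assumes t: "t < twoN" and x: "x < D" and k: "k < D" "U t $$ (k, x) \<noteq> 0"
    and k': "k' < D" "U t $$ (k', x) \<noteq> 0"
    and outside: "\<forall>p<nq. p \<notin> set (l # Rreg t) \<longrightarrow> qbit nq k p = qbit nq k' p"
  shows "k = k'"
proof -
  have inv: "supp_inv t" using supp_inv t by simp
  have Ik: "agree_from (base t) k x \<and>
      qbit nq k l = (if t = 0 then qbit nq x l else qbit nq k (Xq (t - 1)) \<noteq> qbit nq x (Xq (t - 1)))"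
    and Ik': "agree_from (base t) k' x \<and>
      qbit nq k' l = (if t = 0 then qbit nq x l else qbit nq k' (Xq (t - 1)) \<noteq> qbit nq x (Xq (t - 1)))"
    using inv k k' x by (simp_all add: supp_inv_def)
  have X: "qbit nq k (Xq (t - 1)) = qbit nq k' (Xq (t - 1))" if "t \<noteq> 0"
  proof -
    have "Xq (t - 1) < base t" using that w_pos base_Suc[of "t - 1"] by simp
    moreover have "l < Xq (t - 1)" using l_less_base[of "t - 1"] base_le_Xq[of "t - 1"] by simp
    ultimately show ?thesis using outside Xq_less_nq[of "t - 1"] t by (auto simp: set_Rreg)
  qed
  show ?thesis
  proof (rule basis_index_eqI[OF k(1)[unfolded D_def] k'(1)[unfolded D_def]], intro allI impI)
    fix p assume p: "p < nq"
    consider "p \<in> set (Rreg t)" | "p = l" | "p \<notin> set (l # Rreg t)" by auto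
    then show "qbit nq k p = qbit nq k' p"
    proof cases
      case 1
      then show ?thesis using Ik Ik' p by (auto simp: set_Rreg agree_from_def)
    next
      case 2
      then show ?thesis using Ik Ik' X by (cases "t = 0") auto
    qed (use outside p in blast)
  qed
qed

lemma interference_free_gate_Q:
  assumes "t < twoN" "x < D"
  shows "interference_free D (gate_Q t) (U t) x"
  unfolding interference_free_def
proof (intro allI impI)
  fix i k k' assume "i < D" "k < D" "k' < D" and nz: "gate_Q t $$ (i, k) \<noteq> 0" "U t $$ (k, x) \<noteq> 0"
    "gate_Q t $$ (i, k') \<noteq> 0" "U t $$ (k', x) \<noteq> 0"
  then have "\<forall>p<nq. p \<notin> set (l # Rreg t) \<longrightarrow> qbit nq i p = qbit nq k p"
    "\<forall>p<nq. p \<notin> set (l # Rreg t) \<longrightarrow> qbit nq i p = qbit nq k' p"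
    using lift_nonzeroD(1)[of i nq _ "l # Rreg t" Q] by (auto simp: gate_Q_def D_def)
  then show "k = k'" using U_col_eqI[OF assms] \<open>k < D\<close> \<open>k' < D\<close> nz(2,4) by auto
qed

lemma interference_free_gate_CNOT: "t < twoN \<Longrightarrow> interference_free D (gate_CNOT t) M x"
  using row_unique_lift[of "[l, Xq t]" nq CNOT] gate_CNOT_qubits row_unique_CNOT
  by (intro row_unique_imp_interference_free) (simp add: gate_CNOT_def D_def)

lemma interference_free_gate_incr: "interference_free D gate_incr M x"
  using row_unique_lift[of "l # [0..<l]" nq] gate_incr_qubits row_unique_controlled_incr[of l]
  by (intro row_unique_imp_interference_free) (simp add: gate_incr_def D_def)

subsubsection \<open>The two families of paths\<close>

definition "half = (2::nat) ^ (w - 1)"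

text \<open>The basis states reached from x after t steps (resp. after the copy of Q in step t)
along paths on which every copy of Q so far has output b.\<close>

definition "path_set b t x = {k. k < D \<and> (t = 0 \<or> qbit nq k l = b) \<and>
   counter k = (counter x + (if b then t else 0)) mod twoN}"
definition "path_set_Q b t x = {k. k < D \<and> qbit nq k l = b \<and>
   counter k = (counter x + (if b then t else 0)) mod twoN}"

text \<open>The qubits first read in step t, and the probability that the copy of Q in step t
outputs b when these qubits hold a and, for t > 0, Q holds b.\<close>

definition "fresh t = (if t = 0 then l # Rreg 0 else Rreg t)"
definition "out_prob b t a = (\<Sum>a'<2 ^ w. if (half \<le> a') = b
    then tprob Q a' (if t = 0 then a else (if b then half else 0) + a) else 0)"

definition "path_weight b t x = (\<Sum>k\<in>path_set b t x. tprob (U t) k x)"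

lemma two_pow_w: "(2::nat) ^ w = 2 * half"
  using w_pos by (simp add: half_def power_Suc[symmetric])

lemma path_set_subset: "path_set b t x \<subseteq> {..<D}"
  by (auto simp: path_set_def)

lemma path_set_Q_subset: "path_set_Q b t x \<subseteq> {..<D}"
  by (auto simp: path_set_Q_def)

lemma out_prob_nonneg: "out_prob b t a \<ge> 0"
  unfolding out_prob_def by (intro sum_nonneg) (simp add: tprob_nonneg)

lemma counter_qwrite:
  assumes "set ps \<subseteq> {..<nq}" "\<forall>p\<in>set ps. l \<le> p"
  shows "counter (qwrite nq ps j a) = counter j"
  unfolding counter_def
proof (rule qread_cong, intro ballI)
  fix p assume "p \<in> set [0..<l]"
  then have "p \<notin> set ps" "p < nq" using assms l_less_nq by auto
  then show "qbit nq (qwrite nq ps j a) p = qbit nq j p" using qbit_qwrite_notin assms(1) by blast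
qed

lemma qread_gate_Q_input:
  assumes t: "t < twoN" and x: "x < D" and k: "k \<in> path_set b t x" "U t $$ (k, x) \<noteq> 0"
  shows "qread nq (l # Rreg t) k = (if t = 0 then qread nq (fresh t) x else (if b then half else 0) + qread nq (fresh t) x)"
proof -
  have "k < D" using k by (simp add: path_set_def)
  then have inv: "agree_from (base t) k x \<and>
      qbit nq k l = (if t = 0 then qbit nq x l else qbit nq k (Xq (t - 1)) \<noteq> qbit nq x (Xq (t - 1)))"
    using supp_inv[of t] t x k(2) by (simp add: supp_inv_def)
  have "qread nq (Rreg t) k = qread nq (Rreg t) x"
    by (rule qread_cong) (use inv Rreg_less_nq[OF t] in \<open>auto simp: set_Rreg agree_from_def\<close>)
  moreover have "t \<noteq> 0 \<Longrightarrow> qbit nq k l = b" using k by (simp add: path_set_def)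
  ultimately show ?thesis using inv by (simp add: qread_Cons fresh_def length_Rreg half_def)
qed

lemma qwrite_gate_Q_mem_path_set_Q:
  assumes t: "t < twoN" and k: "k \<in> path_set b t x" and a: "a < 2 ^ w"
  shows "qwrite nq (l # Rreg t) k a \<in> path_set_Q b t x \<longleftrightarrow> (half \<le> a) = b"
proof -
  have ps: "set (l # Rreg t) \<subseteq> {..<nq}" using gate_Q_qubits[OF t] by simp
  have "qwrite nq (l # Rreg t) k a < D" using qwrite_less[OF ps] k by (simp add: path_set_def D_def)
  moreover have "counter (qwrite nq (l # Rreg t) k a) = counter k"
    using ps l_less_base[of t] by (intro counter_qwrite) (auto simp: set_Rreg)
  moreover have "qbit nq (qwrite nq (l # Rreg t) k a) l \<longleftrightarrow> half \<le> a"
    using qbit_qwrite_head[OF l_less_nq, of "Rreg t" k a] div_pow_eq_1_iff[OF a w_pos]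
    by (simp add: length_Rreg half_def)
  ultimately show ?thesis using k by (auto simp: path_set_def path_set_Q_def)
qed

lemma sum_tprob_gate_Q_path:
  assumes t: "t < twoN" and x: "x < D" and k: "k \<in> path_set b t x" "U t $$ (k, x) \<noteq> 0"
  shows "(\<Sum>i\<in>path_set_Q b t x. tprob (gate_Q t) i k) = out_prob b t (qread nq (fresh t) x)"
proof -
  let ?ps = "l # Rreg t"
  let ?h = "\<lambda>i z. if i \<in> path_set_Q b t x then (cmod z)\<^sup>2 else 0"
  have ps: "set ?ps \<subseteq> {..<nq}" "distinct ?ps" using gate_Q_qubits[OF t] by auto
  have kD: "k < 2 ^ nq" using k by (simp add: path_set_def D_def)
  have "(\<Sum>i\<in>path_set_Q b t x. tprob (gate_Q t) i k) = (\<Sum>i<2 ^ nq. ?h i (gate_Q t $$ (i, k)))"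
    using path_set_Q_subset by (simp add: sum.If_cases Int_absorb1 tprob_def D_def)
  also have "\<dots> = (\<Sum>a<2 ^ length ?ps. ?h (qwrite nq ?ps k a) (Q $$ (a, qread nq ?ps k)))"
    unfolding gate_Q_def by (rule sum_lift_col[OF ps kD]) simp
  also have "\<dots> = out_prob b t (qread nq (fresh t) x)"
    unfolding out_prob_def
  proof (rule sum.cong)
    show "{..<2 ^ length ?ps} = {..<2 ^ w}" using w_pos by (simp add: length_Rreg)
  next
    fix a :: nat assume "a \<in> {..<2 ^ w}"
    then have a: "a < 2 ^ w" by simp
    show "?h (qwrite nq ?ps k a) (Q $$ (a, qread nq ?ps k)) = (if (half \<le> a) = b
        then tprob Q a (if t = 0 then qread nq (fresh t) x else (if b then half else 0) + qread nq (fresh t) x)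
        else 0)"
      by (simp only: qwrite_gate_Q_mem_path_set_Q[OF t k(1) a] qread_gate_Q_input[OF t x k] tprob_def)
  qed
  finally show ?thesis .
qed

lemma sum_tprob_gate_CNOT_path_ge:
  assumes t: "t < twoN" and k: "k \<in> path_set_Q b t x"
  shows "1 \<le> (\<Sum>i\<in>path_set_Q b t x. tprob (gate_CNOT t) i k)"
proof -
  let ?ps = "[l, Xq t]"
  define c where "c = qread nq ?ps k"
  define i where "i = qwrite nq ?ps k (cnot_perm c)"
  have ps: "set ?ps \<subseteq> {..<nq}" "distinct ?ps" using gate_CNOT_qubits[OF t] by auto
  have kD: "k < 2 ^ nq" using k by (simp add: path_set_Q_def D_def)
  have c4: "c < 4" "cnot_perm c < 2 ^ length ?ps"
    using qread_less[of nq ?ps k] cnot_perm_less by (simp_all add: c_def)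
  have "gate_CNOT t $$ (i, k) = CNOT $$ (cnot_perm c, c)"
    unfolding gate_CNOT_def i_def c_def by (rule lift_entry_qwrite[OF ps kD c4(2)[unfolded c_def]])
  also have "\<dots> = 1" using CNOT_entry[OF _ c4(1)] cnot_perm_less[OF c4(1)] by simp
  finally have one: "tprob (gate_CNOT t) i k = 1" by (simp add: tprob_def)
  have "qbit nq i l = qbit nq k l"
    using qbit_cnot(1)[of nq l "Xq t" i k] qread_qwrite[OF ps c4(2)] by (simp add: i_def c_def)
  moreover have "counter i = counter k"
    unfolding i_def using ps l_less_base[of t] base_le_Xq[of t] by (intro counter_qwrite) auto
  moreover have "i < D" using qwrite_less[OF ps(1) kD] by (simp add: i_def D_def)
  ultimately have "i \<in> path_set_Q b t x" using k by (simp add: path_set_Q_def)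
  then show ?thesis
    using one member_le_sum[of i _ "\<lambda>i. tprob (gate_CNOT t) i k"] tprob_nonneg
      finite_subset[OF path_set_Q_subset] by (metis finite_lessThan)
qed

lemma sum_tprob_gate_incr_path_ge:
  assumes k: "k \<in> path_set_Q b t x"
  shows "1 \<le> (\<Sum>i\<in>path_set b (Suc t) x. tprob gate_incr i k)"
proof -
  let ?ps = "l # [0..<l]"
  define c where "c = qread nq ?ps k"
  define i where "i = qwrite nq ?ps k (cincr_perm l c)"
  have ps: "set ?ps \<subseteq> {..<nq}" "distinct ?ps" using gate_incr_qubits by auto
  have kD: "k < 2 ^ nq" using k by (simp add: path_set_Q_def D_def)
  have c: "c < 2 ^ Suc l" "cincr_perm l c < 2 ^ length ?ps"
    using qread_less[of nq ?ps k] cincr_perm_less by (simp_all add: c_def)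
  have "gate_incr $$ (i, k) = controlled l (incr (2 ^ l)) $$ (cincr_perm l c, c)"
    unfolding gate_incr_def i_def c_def by (rule lift_entry_qwrite[OF ps kD c(2)[unfolded c_def]])
  also have "\<dots> = 1" using controlled_incr_entry[OF _ c(1)] cincr_perm_less[OF c(1)] by simp
  finally have one: "tprob gate_incr i k = 1" by (simp add: tprob_def)
  have "qread nq ?ps i = cincr_perm l (qread nq ?ps k)"
    using qread_qwrite[OF ps c(2)] by (simp add: i_def c_def)
  note incr = counter_cincr[OF this]
  have "counter k = (counter x + (if b then t else 0)) mod twoN" "qbit nq k l = b"
    using k by (simp_all add: path_set_Q_def)
  then have "counter i = (counter x + (if b then Suc t else 0)) mod twoN"
    using incr(2) by (simp add: mod_Suc_eq)
  moreover have "i < D" using qwrite_less[OF ps(1) kD] by (simp add: i_def D_def)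
  ultimately have "i \<in> path_set b (Suc t) x" using incr(1) k by (simp add: path_set_def path_set_Q_def)
  then show ?thesis
    using one member_le_sum[of i _ "\<lambda>i. tprob gate_incr i k"] tprob_nonneg
      finite_subset[OF path_set_subset] by (metis finite_lessThan)
qed

lemma path_weight_Suc_ge:
  assumes t: "t < twoN" and x: "x < D"
  shows "out_prob b t (qread nq (fresh t) x) * path_weight b t x \<le> path_weight b (Suc t) x"
proof -
  have "out_prob b t (qread nq (fresh t) x) * path_weight b t x \<le> (\<Sum>i\<in>path_set_Q b t x. tprob (U_Q t) i x)"
    unfolding U_Q_def path_weight_def
    by (rule sum_tprob_mult_ge[OF gate_carriers(1) U_carrier x interference_free_gate_Q[OF t x]
          path_set_subset path_set_Q_subset out_prob_nonneg])
       (simp add: sum_tprob_gate_Q_path[OF t x])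
  also have "\<dots> \<le> (\<Sum>i\<in>path_set_Q b t x. tprob (U_CNOT t) i x)"
    using sum_tprob_mult_ge[OF gate_carriers(2) U_Q_carrier x interference_free_gate_CNOT[OF t]
        path_set_Q_subset path_set_Q_subset, where c = 1] sum_tprob_gate_CNOT_path_ge[OF t]
    by (simp add: U_CNOT_def)
  also have "\<dots> \<le> (\<Sum>i\<in>path_set b (Suc t) x. tprob (gate_incr * U_CNOT t) i x)"
    using sum_tprob_mult_ge[OF gate_carriers(3) U_CNOT_carrier x interference_free_gate_incr
        path_set_Q_subset path_set_subset, where c = 1] sum_tprob_gate_incr_path_ge
    by simp
  also have "\<dots> = path_weight b (Suc t) x"
    by (simp only: path_weight_def U_Suc)
  finally show ?thesis .
qed

lemma path_weight_0: "x < D \<Longrightarrow> path_weight b 0 x = 1"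
proof -
  assume x: "x < D"
  then have "x \<in> path_set b 0 x" using counter_less[of x] by (simp add: path_set_def)
  moreover have "tprob (U 0) k x = (if k = x then 1 else 0)" if "k \<in> path_set b 0 x" for k
    using that x by (auto simp: tprob_def path_set_def D_def nq_def)
  ultimately show ?thesis
    using finite_subset[OF path_set_subset] by (simp add: path_weight_def cong: sum.cong)
qed

lemma path_weight_ge_prod:
  assumes x: "x < D"
  shows "T \<le> twoN \<Longrightarrow> (\<Prod>t<T. out_prob b t (qread nq (fresh t) x)) \<le> path_weight b T x"
proof (induction T)
  case (Suc T)
  then have T: "T < twoN" by simp
  have "(\<Prod>t<Suc T. out_prob b t (qread nq (fresh t) x))
      = out_prob b T (qread nq (fresh T) x) * (\<Prod>t<T. out_prob b t (qread nq (fresh t) x))"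
    by (simp add: mult.commute)
  also have "\<dots> \<le> out_prob b T (qread nq (fresh T) x) * path_weight b T x"
    using Suc T by (intro mult_left_mono out_prob_nonneg) simp_all
  also have "\<dots> \<le> path_weight b (Suc T) x" by (rule path_weight_Suc_ge[OF T x])
  finally show ?case .
qed (simp add: path_weight_0[OF x])

definition "avg_out_prob b t = (\<Sum>a<2 ^ length (fresh t). out_prob b t a) / 2 ^ length (fresh t)"

lemma Q_carrier: "Q \<in> carrier_mat (2 ^ w) (2 ^ w)"
  using Q_circuit by (simp add: is_circuit_def is_unitary_def)

lemma Q_unitary: "is_unitary (2 * half) Q"
  using Q_circuit by (simp add: is_circuit_def two_pow_w)

lemma p_acc_Q: "p_acc w Q 1 = (\<Sum>a<half. \<Sum>c<half. tprob Q a c) / half"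
  using p_acc_1_eq_block[OF Q_carrier w_pos] by (simp add: half_def)

lemma sum_out_prob_0: "(\<Sum>a<2 ^ w. out_prob b 0 a) = half"
proof -
  have "(\<Sum>a<2 ^ w. out_prob b 0 a) = (\<Sum>a'<2 * half. \<Sum>a<2 * half. if (half \<le> a') = b then tprob Q a' a else 0)"
    unfolding out_prob_def two_pow_w by (simp only: if_P[OF refl]) (rule sum.swap)
  also have "\<dots> = (\<Sum>a'<2 * half. if (half \<le> a') = b then 1 else 0)"
    using unitary_row_tprob_sum[OF Q_unitary] by (intro sum.cong) auto
  also have "\<dots> = half"
    by (cases b) (simp_all add: sum_lessThan_double_split)
  finally show ?thesis .
qed

lemma out_prob_Suc:
  "out_prob b (Suc t) a = (\<Sum>a'\<in>(if b then {half..<2 * half} else {..<half}). tprob Q a' ((if b then half else 0) + a))"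
proof -
  have "{a'\<in>{..<2 * half}. (half \<le> a') = b} = (if b then {half..<2 * half} else {..<half})"
    by (cases b) auto
  moreover have "out_prob b (Suc t) a = (\<Sum>a'\<in>{a'\<in>{..<2 * half}. (half \<le> a') = b}. tprob Q a' ((if b then half else 0) + a))"
    unfolding out_prob_def two_pow_w by (simp only: nat.distinct if_False sum.inter_filter[OF finite_lessThan])
  ultimately show ?thesis by (simp only:)
qed

lemma sum_out_prob_Suc: "(\<Sum>a<half. out_prob b (Suc t) a) = (\<Sum>a<half. \<Sum>c<half. tprob Q a c)"
proof (cases b)
  case False
  then have "(\<Sum>a<half. out_prob b (Suc t) a) = (\<Sum>a<half. \<Sum>a'<half. tprob Q a' a)"
    by (simp add: out_prob_Suc)
  also have "\<dots> = (\<Sum>a<half. \<Sum>c<half. tprob Q a c)"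
    by (rule sum.swap)
  finally show ?thesis .
next
  case True
  let ?hi = "{half..<2 * half}"
  have "(\<Sum>a<half. out_prob b (Suc t) a) = (\<Sum>a<half. \<Sum>a'\<in>?hi. tprob Q a' (half + a))"
    using True by (simp add: out_prob_Suc)
  also have "\<dots> = (\<Sum>a'\<in>?hi. \<Sum>a<half. tprob Q a' (half + a))"
    by (rule sum.swap)
  also have "\<dots> = (\<Sum>a'\<in>?hi. \<Sum>c\<in>?hi. tprob Q a' c)"
  proof (rule sum.cong[OF refl])
    fix a'
    have "(\<Sum>c\<in>{0 + half..<half + half}. tprob Q a' c) = (\<Sum>r\<in>{0..<half}. tprob Q a' (r + half))"
      by (rule sum.shift_bounds_nat_ivl)
    then show "(\<Sum>a<half. tprob Q a' (half + a)) = (\<Sum>c\<in>?hi. tprob Q a' c)"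
      by (simp add: lessThan_atLeast0 add.commute mult_2)
  qed
  also have "\<dots> = (\<Sum>a<half. \<Sum>c<half. tprob Q a c)"
    by (rule unitary_tprob_diag_blocks_eq[OF Q_unitary])
  finally show ?thesis .
qed

lemma length_fresh: "length (fresh t) = (if t = 0 then w else w - 1)"
  using w_pos by (simp add: fresh_def length_Rreg)

lemma avg_out_prob_0: "avg_out_prob b 0 = 1 / 2"
proof -
  have "(2::real) ^ w = 2 * real half" using arg_cong[OF two_pow_w, of real] by simp
  moreover have "half > 0" by (simp add: half_def)
  moreover have "avg_out_prob b 0 = real half / 2 ^ w"
    unfolding avg_out_prob_def length_fresh using sum_out_prob_0[of b] by simp
  ultimately show ?thesis by simp
qed

lemma avg_out_prob_Suc: "avg_out_prob b (Suc t) = p_acc w Q 1"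
proof -
  have "avg_out_prob b (Suc t) = (\<Sum>a<half. out_prob b (Suc t) a) / real half"
    by (simp add: avg_out_prob_def length_fresh half_def)
  then show ?thesis by (simp only: p_acc_Q sum_out_prob_Suc)
qed

lemma prod_avg_out_prob: "(\<Prod>t<twoN. avg_out_prob b t) = 1 / 2 * p_acc w Q 1 ^ (twoN - 1)"
proof -
  have "twoN = Suc (twoN - 1)" by (simp add: twoN_def)
  then have "(\<Prod>t<twoN. avg_out_prob b t) = avg_out_prob b 0 * (\<Prod>t<twoN - 1. avg_out_prob b (Suc t))"
    by (metis prod.lessThan_Suc_shift)
  then show ?thesis by (simp add: avg_out_prob_0 avg_out_prob_Suc)
qed

lemma fresh_qubits: "t < twoN \<Longrightarrow> set (fresh t) \<subseteq> {..<nq} \<and> distinct (fresh t) \<and> 0 \<notin> set (fresh t)"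
  using gate_Q_qubits[of t] gate_Q_qubits[of 0] l_less_base[of t]
  by (auto simp: fresh_def set_Rreg twoN_def l_def)

lemma fresh_disjoint: "t \<noteq> s \<Longrightarrow> set (fresh t) \<inter> set (fresh s) = {}"
proof -
  have "set (fresh t) \<inter> set (fresh s) = {}" if ts: "t < s" for t s
  proof -
    have "set (fresh t) \<subseteq> {..<base t + w}" using l_less_base[of t] by (auto simp: fresh_def set_Rreg)
    moreover have "set (fresh s) \<subseteq> {base s..}" using ts by (auto simp: fresh_def set_Rreg)
    ultimately show ?thesis using base_mono[OF ts] by fastforce
  qed
  then show "t \<noteq> s \<Longrightarrow> ?thesis" by (metis Int_commute linorder_neqE_nat)
qed

lemma sum_accepted_prod_out_prob:
  "(\<Sum>x<D. (if qbit nq x 0 then 0 else 1) * (\<Prod>t<twoN. out_prob b t (qread nq (fresh t) x)))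
    = 2 ^ (nq - 1) / 2 * p_acc w Q 1 ^ (twoN - 1)"
  using sum_not_qbit_0_prod_qread[of nq twoN fresh "out_prob b"] fresh_qubits fresh_disjoint
  by (simp add: nq_eq D_def prod_avg_out_prob[unfolded avg_out_prob_def])

lemma not_qbit_0_iff_counter: "\<not> qbit nq i 0 \<longleftrightarrow> counter i < 2 ^ m"
proof -
  have "[0..<l] = 0 # [1..<Suc m]" by (simp add: l_def upt_conv_Cons)
  then show ?thesis
    using qread_Cons_less_iff[of nq 0 "[1..<Suc m]" i] unfolding counter_def length_upt diff_Suc_1
    by (simp only:)
qed

text \<open>Both families end with the counter at its initial value, so they stay accepted.\<close>

lemma path_weights_le_accepted:
  assumes x: "x < D" "\<not> qbit nq x 0"
  shows "path_weight False twoN x + path_weight True twoN x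
    \<le> (\<Sum>i<D. (if qbit nq i 0 then 0 else 1) * tprob (U twoN) i x)"
proof -
  let ?A = "{i. i < D \<and> \<not> qbit nq i 0}"
  have sub: "path_set b twoN x \<subseteq> ?A" for b
    using x counter_less[of x] by (auto simp: path_set_def not_qbit_0_iff_counter)
  have disj: "path_set False twoN x \<inter> path_set True twoN x = {}"
    by (auto simp: path_set_def twoN_def)
  have "path_weight False twoN x + path_weight True twoN x
      = (\<Sum>i\<in>path_set False twoN x \<union> path_set True twoN x. tprob (U twoN) i x)"
    unfolding path_weight_def
    by (rule sum.union_disjoint[symmetric]) (use finite_subset[OF path_set_subset] disj in auto)
  also have "\<dots> \<le> (\<Sum>i\<in>?A. tprob (U twoN) i x)"
    by (rule sum_mono2) (use sub in \<open>auto simp: tprob_nonneg\<close>)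
  also have "\<dots> = (\<Sum>i<D. if \<not> qbit nq i 0 then tprob (U twoN) i x else 0)"
    by (simp add: sum.If_cases lessThan_def Collect_conj_eq)
  also have "\<dots> = (\<Sum>i<D. (if qbit nq i 0 then 0 else 1) * tprob (U twoN) i x)"
    by (intro sum.cong) auto
  finally show ?thesis .
qed

lemma p_acc_R1_ge: "p_acc w Q 1 ^ (twoN - 1) \<le> p_acc nq (U twoN) 1"
proof -
  let ?a = "\<lambda>i. if qbit nq i 0 then 0 else 1 :: real"
  let ?P = "\<lambda>b x. \<Prod>t<twoN. out_prob b t (qread nq (fresh t) x)"
  have nq: "nq \<ge> 1" by (simp add: nq_eq)
  have "2 ^ (nq - 1) * p_acc w Q 1 ^ (twoN - 1) = (\<Sum>x<D. ?a x * (?P False x + ?P True x))"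
    using sum_accepted_prod_out_prob[of False] sum_accepted_prod_out_prob[of True]
    by (simp add: distrib_left sum.distrib)
  also have "\<dots> \<le> (\<Sum>x<D. ?a x * (\<Sum>i<D. ?a i * tprob (U twoN) i x))"
  proof (rule sum_mono)
    fix x assume "x \<in> {..<D}"
    then have x: "x < D" by simp
    have "?P False x + ?P True x \<le> path_weight False twoN x + path_weight True twoN x"
      using path_weight_ge_prod[OF x] by (simp add: add_mono)
    then show "?a x * (?P False x + ?P True x) \<le> ?a x * (\<Sum>i<D. ?a i * tprob (U twoN) i x)"
      using path_weights_le_accepted[OF x] by (cases "qbit nq x 0") simp_all
  qed
  also have "\<dots> = (\<Sum>x<D. \<Sum>i<D. ?a i * ?a x * tprob (U twoN) i x)"
    by (simp add: sum_distrib_left mult_ac)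
  also have "\<dots> = (\<Sum>i<D. \<Sum>x<D. ?a i * ?a x * tprob (U twoN) i x)"
    by (rule sum.swap)
  also have "\<dots> = 2 ^ (nq - 1) * p_acc nq (U twoN) 1"
    unfolding p_acc_1_eq_sum_tprob[OF U_carrier[unfolded D_def] nq] D_def by simp
  finally show ?thesis by simp
qed

end

theorem proposition13:
  fixes w m N :: nat and Q :: "complex mat"
  assumes "w \<ge> 1" and "is_circuit w Q" and "N = 2 ^ m"
  shows "p_acc (R1_nqubits w m) (R1 w m Q) 1 \<ge> (p_acc w Q 1) ^ (2 * N - 1)"
proof -
  interpret R1_circuit w m Q using assms(1,2) by unfold_locales
  show ?thesis
    using p_acc_R1_ge assms(3) by (simp add: R1_def nq_def twoN_def)
qed

end
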